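(* Let $1\le i\le n$ and $\varphi\in\mathcal{I}_1^{i+}=C([-\bar\tau_l^i,0],\mathbb{R}_+^2)$, where $\bar\tau_l^i=\max_{0\le t\le w}\tau_l^i(t)$. Then the orbit $t\mapsto\bar P^i(t,\varphi)$ of the mosquito system described in the context is precompact.
   Context: Let $w>0$; for patch $i$, $\mu_b^i,\mu_l^i,\mu_m^i,K^i,\tau_l^i$ are positive continuous $w$-periodic functions on $\mathbb{R}$, $\tau_l^i$ continuously differentiable, $K^i$ bounded. The mosquito system of patch $i$ is $\dot L_s^i=\mu_b^i(t)\big(1-\frac{L_s^i(t)}{K^i(t)}\big)S_m^i(t)-\mu_l^i(t)L_s^i(t)$, $\dot S_m^i=(1-\dot\tau_l^i(t))\mu_b^i(t-\tau_l^i(t))\big(1-\frac{L_s^i(t-\tau_l^i(t))}{K^i(t-\tau_l^i(t))}\big)S_m^i(t-\tau_l^i(t))e^{-\int_{t-\tau_l^i(t)}^t\mu_l^i(s)ds}-\mu_m^i(t)S_m^i(t)$. $\bar P^i(t,\varphi)\in\mathcal{I}_1^{i+}$ denotes the state (history segment on $[-\bar\tau_l^i,0]$) at time $t\ge0$ of the unique solution of this system with initial history $\varphi$ for $(L_s^i,S_m^i)$. *)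

theory Defs
  imports "HOL-Analysis.Analysis"
begin

definition clamp_hist :: "real \<Rightarrow> real \<Rightarrow> real" where
  "clamp_hist r s = max (- r) (min 0 s)"

text \<open>History segment x_t restricted to [-r,0], viewed as an element of the
  sup-normed Banach space of bounded continuous functions (extended constantly
  outside [-r,0]; this is an isometric copy of C([-r,0], R^2)).\<close>
definition hist_seg :: "real \<Rightarrow> (real \<Rightarrow> real \<times> real) \<Rightarrow> real \<Rightarrow> (real \<Rightarrow>\<^sub>C (real \<times> real))" where
  "hist_seg r x t = Bcontfun (\<lambda>s. x (t + clamp_hist r s))"

definition periodic_fun :: "real \<Rightarrow> (real \<Rightarrow> real) \<Rightarrow> bool" where
  "periodic_fun w f \<longleftrightarrow> (\<forall>t. f (t + w) = f t)"

end

theory Submission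
  imports Defs "HOL-Complex_Analysis.Great_Picard"
begin

text \<open>
  The larval density L is bounded because it decreases whenever it exceeds max K.
  For the adults, the surviving larval cohort Y t = L (t - tau t) * exp (- integral of mul over
  [t - tau t, t]) satisfies Y' = R - mul * Y with the same recruitment term R as
  S' = R - mum * S. Hence S - Y solves a linear equation with decay rate at least min mum > 0
  and bounded forcing (mul - mum) * Y, so S is bounded too. Then both right-hand sides are
  bounded, (L, S) is Lipschitz on [0, \<infinity>) and thus uniformly continuous on [-r, \<infinity>), and the
  Arzela-Ascoli theorem makes the set of its history segments precompact.
\<close>

lemma periodic_fun_add_mult:
  assumes "periodic_fun w f"
  shows "f (t + real n * w) = f t"
proof (induction n)
  case (Suc n)
  have "f (t + real (Suc n) * w) = f ((t + real n * w) + w)"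
    by (simp add: algebra_simps)
  with Suc assms show ?case
    unfolding periodic_fun_def by simp
qed simp

lemma periodic_fun_range:
  assumes "periodic_fun w f" "w > 0"
  shows "range f = f ` {0..w}"
proof -
  have "f t \<in> f ` {0..w}" for t
  proof -
    define k where "k = \<lfloor>t / w\<rfloor>"
    define s where "s = t - real_of_int k * w"
    have "real_of_int k \<le> t / w" "t / w < real_of_int k + 1"
      unfolding k_def by linarith+
    then have "s \<in> {0..w}"
      using \<open>w > 0\<close> unfolding s_def by (auto simp: field_simps)
    moreover have "f t = f s"
    proof (cases "k \<ge> 0")
      case True
      then show ?thesis
        using periodic_fun_add_mult[OF assms(1), of s "nat k"] by (simp add: s_def)
    next
      case False
      then show ?thesis
        using periodic_fun_add_mult[OF assms(1), of t "nat (- k)"] by (simp add: s_def)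
    qed
    ultimately show ?thesis by blast
  qed
  then show ?thesis by blast
qed

lemma periodic_fun_compact_range:
  assumes "periodic_fun w f" "w > 0" "continuous_on UNIV f"
  shows "compact (range f)"
  unfolding periodic_fun_range[OF assms(1,2)]
  using assms(3) by (auto intro: compact_continuous_image continuous_on_subset)

lemma periodic_fun_le_SUP:
  assumes "periodic_fun w f" "w > 0" "continuous_on UNIV f"
  shows "f t \<le> (SUP s\<in>{0..w}. f s)"
proof -
  obtain s where "s \<in> {0..w}" "f t = f s"
    using periodic_fun_range[OF assms(1,2)] by (metis imageE rangeI)
  moreover have "bdd_above (f ` {0..w})"
    using periodic_fun_compact_range[OF assms] periodic_fun_range[OF assms(1,2)]
    by (metis bounded_imp_bdd_above compact_imp_bounded)
  ultimately show ?thesis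
    by (simp add: cSUP_upper)
qed

lemma periodic_fun_deriv:
  assumes "periodic_fun w f" "\<And>t. (f has_real_derivative f' t) (at t)"
  shows "periodic_fun w f'"
  unfolding periodic_fun_def
proof
  fix t
  have "(\<lambda>x. f (x + w)) = f"
    using assms(1) unfolding periodic_fun_def by auto
  moreover have "((\<lambda>x. f (x + w)) has_real_derivative f' (t + w)) (at t)"
    using DERIV_shift assms(2) by blast
  ultimately show "f' (t + w) = f' t"
    using DERIV_unique assms(2) by metis
qed

lemma compact_range_pos_bounds:
  fixes f :: "'a \<Rightarrow> real"
  assumes "compact (range f)" "\<And>t. f t > 0"
  obtains m M where "0 < m" "\<And>t. m \<le> f t" "\<And>t. f t \<le> M"
proof -
  obtain a where "\<And>t. f a \<le> f t"
    using compact_attains_inf[OF assms(1)] by blast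
  moreover obtain b where "\<And>t. f t \<le> f b"
    using compact_attains_sup[OF assms(1)] by blast
  ultimately show ?thesis
    using that assms(2) by blast
qed

lemma le_max_if_deriv_nonpos_above:
  fixes f f' :: "real \<Rightarrow> real"
  assumes cont: "continuous_on {a..} f"
    and deriv: "\<And>t. t > a \<Longrightarrow> (f has_real_derivative f' t) (at t)"
    and nonpos: "\<And>t. t > a \<Longrightarrow> f t > M \<Longrightarrow> f' t \<le> 0"
    and "t \<ge> a"
  shows "f t \<le> max (f a) M"
proof (rule ccontr)
  define c where "c = max (f a) M"
  assume "\<not> f t \<le> max (f a) M"
  then have ft: "f t > c" and "a < t"
    using \<open>t \<ge> a\<close> unfolding c_def by (auto simp: le_less)
  have cont_upto: "continuous_on {a..t} f"
    using cont by (rule continuous_on_subset) auto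
  \<comment> \<open>Let s be the last time before t at which f is at most c; on (s, t] f exceeds c, so it
    cannot increase there.\<close>
  define A where "A = {x\<in>{a..t}. f x \<le> c}"
  have "closed A"
    unfolding A_def using cont_upto by (intro continuous_on_closed_Collect_le) auto
  moreover have "a \<in> A" "bdd_above A"
    unfolding A_def c_def using \<open>a < t\<close> by (auto intro: bdd_aboveI[of _ t])
  ultimately have "Sup A \<in> A"
    using closed_contains_Sup by blast
  define s where "s = Sup A"
  have s: "a \<le> s" "s < t" "f s \<le> c"
    using \<open>Sup A \<in> A\<close> ft unfolding s_def A_def by (auto simp: le_less)
  have above: "f x > c" if "s < x" "x \<le> t" for x
  proof (rule ccontr)
    assume "\<not> c < f x"
    then have "x \<in> A"
      unfolding A_def using that s by auto
    then show False
      using cSup_upper[OF _ \<open>bdd_above A\<close>] that unfolding s_def by fastforce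
  qed
  have "f t \<le> f s"
  proof (rule DERIV_nonpos_imp_decreasing_open[of s t f])
    show "\<exists>y. (f has_real_derivative y) (at x) \<and> y \<le> 0" if "s < x" "x < t" for x
      using deriv[of x] nonpos[of x] above[of x] that s unfolding c_def by force
    show "continuous_on {s..t} f"
      using cont_upto by (rule continuous_on_subset) (use s in auto)
  qed (use s in auto)
  then show False
    using s ft by linarith
qed

lemma le_max_if_linear_decay:
  fixes z m h :: "real \<Rightarrow> real"
  assumes cont: "continuous_on {a..} z"
    and deriv: "\<And>t. t > a \<Longrightarrow> (z has_real_derivative - m t * z t + h t) (at t)"
    and decay: "\<And>t. t > a \<Longrightarrow> m0 \<le> m t" "m0 > 0"
    and forcing: "\<And>t. t > a \<Longrightarrow> h t \<le> H" "H \<ge> 0"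
    and "t \<ge> a"
  shows "z t \<le> max (z a) (H / m0)"
proof (rule le_max_if_deriv_nonpos_above[OF cont deriv _ \<open>t \<ge> a\<close>])
  fix s assume "s > a" "z s > H / m0"
  moreover have "H / m0 \<ge> 0"
    using forcing(2) decay(2) by simp
  ultimately have "z s \<ge> 0"
    by linarith
  have "H < m0 * z s"
    using \<open>z s > H / m0\<close> decay(2) by (simp add: field_simps)
  also have "\<dots> \<le> m s * z s"
    using decay(1)[OF \<open>s > a\<close>] \<open>z s \<ge> 0\<close> by (rule mult_right_mono)
  finally show "- m s * z s + h s \<le> 0"
    using forcing(1)[OF \<open>s > a\<close>] by linarith
qed

lemma uniformly_continuous_on_Ici:
  fixes f :: "real \<Rightarrow> 'a::metric_space"
  assumes "continuous_on {a..} f" "uniformly_continuous_on {b..} f"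
  shows "uniformly_continuous_on {a..} f"
  unfolding uniformly_continuous_on_def
proof (intro allI impI)
  fix e :: real assume "e > 0"
  have "continuous_on {a..b+1} f"
    using assms(1) by (rule continuous_on_subset) auto
  then have "uniformly_continuous_on {a..b+1} f"
    by (rule compact_uniformly_continuous) simp
  then obtain d1 where "d1 > 0"
    and d1: "\<forall>x\<in>{a..b+1}. \<forall>y\<in>{a..b+1}. dist y x < d1 \<longrightarrow> dist (f y) (f x) < e"
    using \<open>e > 0\<close> unfolding uniformly_continuous_on_def by blast
  obtain d2 where "d2 > 0"
    and d2: "\<forall>x\<in>{b..}. \<forall>y\<in>{b..}. dist y x < d2 \<longrightarrow> dist (f y) (f x) < e"
    using assms(2) \<open>e > 0\<close> unfolding uniformly_continuous_on_def by blast
  \<comment> \<open>Points closer than 1 either both lie in [b, \<infinity>) or both lie in [a, b + 1].\<close>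
  have "dist (f y) (f x) < e"
    if "x \<in> {a..}" "y \<in> {a..}" "dist y x < min 1 (min d1 d2)" for x y
  proof (cases "x \<ge> b \<and> y \<ge> b")
    case True
    then show ?thesis
      using d2 that by simp
  next
    case False
    then have "x \<in> {a..b+1}" "y \<in> {a..b+1}"
      using that by (auto simp: dist_real_def)
    then show ?thesis
      using d1 that by simp
  qed
  then show "\<exists>d>0. \<forall>x\<in>{a..}. \<forall>y\<in>{a..}. dist y x < d \<longrightarrow> dist (f y) (f x) < e"
    using \<open>d1 > 0\<close> \<open>d2 > 0\<close> by (intro exI[of _ "min 1 (min d1 d2)"]) auto
qed

lemma bounded_image_Ici:
  fixes f :: "real \<Rightarrow> 'a::metric_space"
  assumes "continuous_on {a..b} f" "bounded (f ` {b..})"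
  shows "bounded (f ` {a..})"
proof -
  have "bounded (f ` {a..b})"
    using assms(1) by (intro compact_imp_bounded compact_continuous_image) auto
  then have "bounded (f ` {a..b} \<union> f ` {b..})"
    using assms(2) by simp
  moreover have "{a..} \<subseteq> {a..b} \<union> {b..}"
    by auto
  then have "f ` {a..} \<subseteq> f ` {a..b} \<union> f ` {b..}"
    by blast
  ultimately show ?thesis
    by (rule bounded_subset)
qed

lemma lipschitz_on_Ici_if_deriv_bounded:
  fixes f f' :: "real \<Rightarrow> real"
  assumes cont: "continuous_on {a..} f"
    and deriv: "\<And>t. t > a \<Longrightarrow> (f has_real_derivative f' t) (at t)"
    and bounded: "bounded (f' ` {a<..})"
  obtains D where "D-lipschitz_on {a..} f"
proof -
  obtain D where D: "\<And>t. t > a \<Longrightarrow> \<bar>f' t\<bar> \<le> D"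
    using bounded by (auto simp: bounded_real)
  have "(max D 0)-lipschitz_on {a<..} f"
  proof (rule lipschitz_onI)
    fix x y assume "x \<in> {a<..}" "y \<in> {a<..}"
    then show "dist (f x) (f y) \<le> max D 0 * dist x y"
      using field_differentiable_bound[of "{a<..}" f f' "max D 0" x y] deriv D
      by (force simp: dist_norm has_field_derivative_at_within)
  qed simp
  then show ?thesis
    using lipschitz_on_closure[of "max D 0" "{a<..}" f] cont that by simp
qed

lemma compact_closure_if_convergent_subseqs:
  fixes A :: "'a::metric_space set"
  assumes subseq: "\<And>y :: nat \<Rightarrow> 'a. (\<And>n. y n \<in> A) \<Longrightarrow>
    \<exists>l r. strict_mono r \<and> (y \<circ> r) \<longlonglongrightarrow> l"
  shows "compact (closure A)"
  unfolding compact_eq_seq_compact_metric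
proof (rule seq_compactI)
  fix f :: "nat \<Rightarrow> 'a" assume "\<forall>n. f n \<in> closure A"
  then have "\<forall>n. \<exists>a\<in>A. dist a (f n) < inverse (real (Suc n))"
    by (simp add: closure_approachable)
  then obtain y where y: "\<And>n. y n \<in> A" "\<And>n. dist (y n) (f n) < inverse (real (Suc n))"
    by metis
  have "\<exists>l r. strict_mono r \<and> (y \<circ> r) \<longlonglongrightarrow> l"
    using y(1) by (rule subseq)
  then obtain l r where r: "strict_mono r" "(y \<circ> r) \<longlonglongrightarrow> l"
    by blast
  have "(\<lambda>n. dist (y (r n)) l) \<longlonglongrightarrow> 0"
    using r(2) unfolding o_def by (rule tendsto_dist_iff[THEN iffD1])
  moreover have "(\<lambda>n. inverse (real (Suc (r n)))) \<longlonglongrightarrow> 0"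
    using LIMSEQ_subseq_LIMSEQ[OF LIMSEQ_inverse_real_of_nat r(1)] by (simp add: o_def)
  ultimately have upper: "(\<lambda>n. dist (y (r n)) l + inverse (real (Suc (r n)))) \<longlonglongrightarrow> 0"
    by (rule tendsto_add_zero)
  have "dist (f (r n)) l \<le> dist (y (r n)) l + inverse (real (Suc (r n)))" for n
    using dist_triangle[of "f (r n)" l "y (r n)"] y(2)[of "r n"] by (simp add: dist_commute)
  then have "(\<lambda>n. dist (f (r n)) l) \<longlonglongrightarrow> 0"
    by (intro tendsto_sandwich[OF _ _ tendsto_const upper]) simp_all
  then have "(f \<circ> r) \<longlonglongrightarrow> l"
    unfolding o_def by (rule tendsto_dist_iff[THEN iffD2])
  moreover have "l \<in> closure A"
    unfolding closure_sequential using y(1) r(2) by (intro exI[of _ "y \<circ> r"]) simp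
  ultimately show "\<exists>l\<in>closure A. \<exists>r. strict_mono r \<and> (f \<circ> r) \<longlonglongrightarrow> l"
    using r(1) by blast
qed

lemma clamp_hist_in: "r \<ge> 0 \<Longrightarrow> clamp_hist r s \<in> {-r..0}"
  unfolding clamp_hist_def by auto

lemma apply_hist_seg:
  assumes "r \<ge> 0" "continuous_on {t - r..t} x"
  shows "apply_bcontfun (hist_seg r x t) s = x (t + clamp_hist r s)"
proof -
  have into: "(\<lambda>s. t + clamp_hist r s) ` UNIV \<subseteq> {t - r..t}"
    using clamp_hist_in[OF assms(1)] by fastforce
  have "continuous_on UNIV (\<lambda>s. x (t + clamp_hist r s))"
    unfolding clamp_hist_def
    by (rule continuous_on_compose2[OF assms(2) _ into[unfolded clamp_hist_def]])
       (intro continuous_intros)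
  moreover have "bounded (range (\<lambda>s. x (t + clamp_hist r s)))"
  proof (rule bounded_subset)
    show "bounded (x ` {t - r..t})"
      using assms(2) by (intro compact_imp_bounded compact_continuous_image) auto
    show "range (\<lambda>s. x (t + clamp_hist r s)) \<subseteq> x ` {t - r..t}"
      using into by blast
  qed
  ultimately show ?thesis
    unfolding hist_seg_def by (simp add: Bcontfun_inverse bcontfun_def)
qed

lemma tendsto_hist_seg:
  assumes "r \<ge> 0" "\<And>n. continuous_on {t n - r..t n} x" "continuous_on {-r..0} g"
    and lim: "uniform_limit {-r..0} (\<lambda>n s. x (t n + s)) g sequentially"
  shows "(\<lambda>n. hist_seg r x (t n)) \<longlonglongrightarrow> hist_seg r g 0"
proof (rule uniform_limit_tendsto_bcontfun)
  have "apply_bcontfun (hist_seg r g 0) s = g (clamp_hist r s)" for s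
    using apply_hist_seg[of r 0 g s] assms(1,3) by simp
  moreover have "apply_bcontfun (hist_seg r x (t n)) s = x (t n + clamp_hist r s)" for n s
    using apply_hist_seg[OF assms(1,2)] .
  moreover have "\<exists>N. \<forall>n\<ge>N. \<forall>s. dist (x (t n + clamp_hist r s)) (g (clamp_hist r s)) < e"
    if "e > 0" for e
  proof -
    obtain N where "\<forall>n\<ge>N. \<forall>s\<in>{-r..0}. dist (x (t n + s)) (g s) < e"
      using lim \<open>e > 0\<close> unfolding uniform_limit_sequentially_iff by blast
    then show ?thesis
      using clamp_hist_in[OF assms(1)] by blast
  qed
  ultimately show "uniform_limit UNIV (\<lambda>n. apply_bcontfun (hist_seg r x (t n)))
      (apply_bcontfun (hist_seg r g 0)) sequentially"
    unfolding uniform_limit_sequentially_iff by simp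
qed

lemma equicontinuous_shifts:
  fixes x :: "real \<Rightarrow> 'a::real_normed_vector"
  assumes "uniformly_continuous_on {-r..} x" "\<And>n. t n \<ge> 0" "s \<in> {-r..0}" "e > 0"
  shows "\<exists>d>0. \<forall>n s'. s' \<in> {-r..0} \<and> norm (s - s') < d \<longrightarrow>
    norm (x (t n + s) - x (t n + s')) < e"
proof -
  obtain d where "d > 0"
    and d: "\<forall>a\<in>{-r..}. \<forall>b\<in>{-r..}. dist b a < d \<longrightarrow> dist (x b) (x a) < e"
    using assms(1,4) unfolding uniformly_continuous_on_def by blast
  have "norm (x (t n + s) - x (t n + s')) < e"
    if "s' \<in> {-r..0}" "norm (s - s') < d" for n s'
  proof -
    have "t n + s \<in> {-r..}" "t n + s' \<in> {-r..}" "dist (t n + s) (t n + s') < d"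
      using that assms(2)[of n] assms(3) by (auto simp: dist_real_def)
    then show ?thesis
      using d by (simp add: dist_norm)
  qed
  then show ?thesis
    using \<open>d > 0\<close> by blast
qed

lemma compact_closure_hist_seg_orbit:
  fixes x :: "real \<Rightarrow> real \<times> real"
  assumes "r \<ge> 0" "uniformly_continuous_on {-r..} x" "bounded (x ` {-r..})"
  shows "compact (closure (hist_seg r x ` {0..}))"
proof (rule compact_closure_if_convergent_subseqs)
  fix y :: "nat \<Rightarrow> real \<Rightarrow>\<^sub>C (real \<times> real)"
  assume "\<And>n. y n \<in> hist_seg r x ` {0..}"
  then have "\<forall>n. \<exists>\<tau>. \<tau> \<ge> 0 \<and> y n = hist_seg r x \<tau>"
    by force
  then obtain t where t: "\<And>n. t n \<ge> 0" "\<And>n. y n = hist_seg r x (t n)"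
    unfolding choice_iff by blast
  obtain M where M: "\<forall>s\<in>{-r..}. norm (x s) \<le> M"
    using assms(3) unfolding bounded_iff by blast
  have bound: "norm (x (t n + s)) \<le> M" if "s \<in> {-r..0}" for n s
    using M t(1)[of n] that by simp
  have equicont: "\<exists>d>0. \<forall>n s'. s' \<in> {-r..0} \<and> norm (s - s') < d \<longrightarrow>
      norm (x (t n + s) - x (t n + s')) < e" if "s \<in> {-r..0}" "e > 0" for s e
    using equicontinuous_shifts[OF assms(2) t(1) that] .
  obtain g and k :: "nat \<Rightarrow> nat" where g: "continuous_on {-r..0} g" and k: "strict_mono k"
    and conv: "\<And>e. e > 0 \<Longrightarrow>
      \<exists>N. \<forall>n s. n \<ge> N \<and> s \<in> {-r..0} \<longrightarrow> norm (x (t (k n) + s) - g s) < e"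
    using Arzela_Ascoli[of "{-r..0}" "\<lambda>n s. x (t n + s)" M] bound equicont by blast
  have "uniform_limit {-r..0} (\<lambda>n s. x (t (k n) + s)) g sequentially"
    unfolding uniform_limit_sequentially_iff dist_norm using conv by blast
  moreover have "continuous_on {t (k n) - r..t (k n)} x" for n
    by (rule continuous_on_subset[OF uniformly_continuous_imp_continuous[OF assms(2)]])
      (use t(1)[of "k n"] in auto)
  ultimately have "(\<lambda>n. hist_seg r x (t (k n))) \<longlonglongrightarrow> hist_seg r g 0"
    using tendsto_hist_seg[OF assms(1) _ g, of "\<lambda>n. t (k n)"] by blast
  then have "(y \<circ> k) \<longlonglongrightarrow> hist_seg r g 0"
    by (simp add: o_def t(2))
  with k show "\<exists>l k. strict_mono k \<and> (y \<circ> k) \<longlonglongrightarrow> l"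
    by blast
qed

lemma bounded_mult_comp:
  fixes f g :: "'a \<Rightarrow> 'b::real_normed_algebra"
  assumes "bounded (f ` A)" "bounded (g ` A)"
  shows "bounded ((\<lambda>x. f x * g x) ` A)"
proof -
  obtain B C where "\<And>x. x \<in> A \<Longrightarrow> norm (f x) \<le> B" "\<And>x. x \<in> A \<Longrightarrow> norm (g x) \<le> C"
    using assms by (auto simp: bounded_iff)
  then have "norm (f x * g x) \<le> B * C" if "x \<in> A" for x
    using norm_mult_ineq[of "f x" "g x"] that
    by (meson mult_mono norm_ge_zero order_trans)
  then show ?thesis
    by (auto simp: bounded_iff)
qed

lemma bounded_comp_image:
  assumes "bounded (f ` B)" "g ` A \<subseteq> B"
  shows "bounded ((\<lambda>x. f (g x)) ` A)"
  using assms by (auto intro: bounded_subset)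

locale mosquito_patch =
  fixes mub mul mum K tau tau' L S :: "real \<Rightarrow> real" and r :: real
  assumes compact_range: "compact (range mub)" "compact (range mul)" "compact (range mum)"
      "compact (range K)" "compact (range tau')"
    and pos: "\<And>t. mub t > 0" "\<And>t. mul t > 0" "\<And>t. mum t > 0" "\<And>t. K t > 0" "\<And>t. tau t > 0"
    and mul_cont: "continuous_on UNIV mul"
    and tau_deriv: "\<And>t. (tau has_real_derivative tau' t) (at t)"
    and tau_le: "\<And>t. tau t \<le> r"
    and L_cont: "continuous_on {-r..} L"
    and S_cont: "continuous_on {-r..} S"
    and nonneg: "\<And>t. t \<ge> -r \<Longrightarrow> L t \<ge> 0 \<and> S t \<ge> 0"
    and L_deriv: "\<And>t. t > 0 \<Longrightarrow>
      (L has_real_derivative mub t * (1 - L t / K t) * S t - mul t * L t) (at t)"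
    and S_deriv: "\<And>t. t > 0 \<Longrightarrow>
      (S has_real_derivative
        (1 - tau' t) * mub (t - tau t) * (1 - L (t - tau t) / K (t - tau t)) * S (t - tau t)
          * exp (- integral {t - tau t..t} mul)
        - mum t * S t) (at t)"
begin

lemma r_pos: "r > 0"
  using tau_le[of 0] pos(5)[of 0] by linarith

lemma coefficients_bounded: "bounded (range mub)" "bounded (range mul)" "bounded (range mum)"
    "bounded (range tau')"
  using compact_range by (simp_all add: compact_imp_bounded)

lemma L_bounded: "bounded (L ` {-r..})"
proof (rule bounded_image_Ici)
  show "continuous_on {-r..0} L"
    using L_cont by (rule continuous_on_subset) auto
  obtain Kmax where Kmax: "\<And>t. K t \<le> Kmax"
    using compact_range_pos_bounds[OF compact_range(4) pos(4)] by metis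
  have "L t \<le> max (L 0) Kmax" if "t \<ge> 0" for t
  proof (rule le_max_if_deriv_nonpos_above[OF _ L_deriv _ that])
    show "continuous_on {0..} L"
      using L_cont by (rule continuous_on_subset) (use r_pos in auto)
    fix s assume "s > 0" "L s > Kmax"
    then have "1 - L s / K s < 0"
      using Kmax[of s] pos(4)[of s] by (simp add: field_simps)
    then have "mub s * (1 - L s / K s) \<le> 0"
      using pos(1)[of s] by (simp add: mult_pos_neg less_imp_le)
    then have "mub s * (1 - L s / K s) * S s \<le> 0"
      using nonneg[of s] \<open>s > 0\<close> r_pos by (simp add: mult_nonpos_nonneg)
    moreover have "mul s * L s \<ge> 0"
      using pos(2)[of s] nonneg[of s] \<open>s > 0\<close> r_pos by simp
    ultimately show "mub s * (1 - L s / K s) * S s - mul s * L s \<le> 0"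
      by linarith
  qed
  then show "bounded (L ` {0..})"
    unfolding bounded_real using nonneg r_pos by (intro exI[of _ "max (L 0) Kmax"]) force
qed

lemma L_div_K_bounded: "bounded ((\<lambda>t. L t / K t) ` {-r..})"
proof -
  obtain k where k: "k > 0" "\<And>t. k \<le> K t"
    using compact_range_pos_bounds[OF compact_range(4) pos(4)] by metis
  obtain C where C: "\<And>t. t \<ge> -r \<Longrightarrow> \<bar>L t\<bar> \<le> C"
    using L_bounded by (auto simp: bounded_real)
  have "\<bar>L t / K t\<bar> \<le> C / k" if "t \<ge> -r" for t
  proof -
    have "\<bar>L t / K t\<bar> = \<bar>L t\<bar> / K t"
      using pos(4)[of t] by simp
    also have "\<dots> \<le> C / k"
      by (rule frac_le) (use C[OF that] k in auto)
    finally show ?thesis .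
  qed
  then show ?thesis
    unfolding bounded_real by blast
qed

definition larval_survival :: "real \<Rightarrow> real" where
  "larval_survival t = exp (- integral {t - tau t..t} mul)"

definition recruitment :: "real \<Rightarrow> real" where
  "recruitment t = (1 - tau' t) * mub (t - tau t) * (1 - L (t - tau t) / K (t - tau t))
     * S (t - tau t) * larval_survival t"

definition surviving_cohort :: "real \<Rightarrow> real" where
  "surviving_cohort t = L (t - tau t) * larval_survival t"

lemma S_has_deriv_recruitment:
  "t > 0 \<Longrightarrow> (S has_real_derivative recruitment t - mum t * S t) (at t)"
  using S_deriv unfolding recruitment_def larval_survival_def .

lemma larval_survival_bounds: "0 < larval_survival t \<and> larval_survival t \<le> 1"
proof -
  have "integral {t - tau t..t} mul \<ge> 0"
    using pos(2) continuous_on_subset[OF mul_cont]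
    by (intro integral_nonneg integrable_continuous_interval) (auto intro: less_imp_le)
  then show ?thesis
    unfolding larval_survival_def by simp
qed

lemma larval_survival_deriv:
  assumes "t > r"
  shows "(larval_survival has_real_derivative
      larval_survival t * (mul (t - tau t) * (1 - tau' t) - mul t)) (at t)"
proof -
  define P where "P x = integral {0..x} mul" for x
  have P_deriv: "(P has_real_derivative mul x) (at x)" if "x > 0" for x
  proof -
    have "(P has_real_derivative mul x) (at x within {0..x+1})"
      unfolding P_def using that continuous_on_subset[OF mul_cont]
      by (intro integral_has_real_derivative) auto
    moreover have "at x within {0..x+1} = at x"
      using that by (intro at_within_interior) auto
    ultimately show ?thesis
      by simp
  qed
  have delay_pos: "x - tau x > 0" if "x > r" for x
    using tau_le[of x] that by linarith
  have survival_eq: "exp (P (x - tau x) - P x) = larval_survival x" if "x > r" for x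
  proof -
    have "integral {0..x - tau x} mul + integral {x - tau x..x} mul = integral {0..x} mul"
      using delay_pos[OF that] pos(5)[of x] continuous_on_subset[OF mul_cont]
      by (intro Henstock_Kurzweil_Integration.integral_combine integrable_continuous_interval)
         auto
    then show ?thesis
      unfolding larval_survival_def P_def by (simp add: algebra_simps)
  qed
  have "((\<lambda>x. x - tau x) has_real_derivative 1 - tau' t) (at t)"
    by (rule DERIV_diff[OF DERIV_ident tau_deriv])
  from DERIV_diff[OF DERIV_chain2[OF P_deriv[OF delay_pos[OF assms]] this] P_deriv[of t]]
  have "((\<lambda>x. P (x - tau x) - P x) has_real_derivative
      mul (t - tau t) * (1 - tau' t) - mul t) (at t)"
    using assms r_pos by simp
  from DERIV_chain2[OF DERIV_exp this]
  have "((\<lambda>x. exp (P (x - tau x) - P x)) has_real_derivative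
      larval_survival t * (mul (t - tau t) * (1 - tau' t) - mul t)) (at t)"
    using survival_eq[OF assms] by simp
  then show ?thesis
    by (rule has_field_derivative_transform_within_open[OF _ open_greaterThan])
      (use assms survival_eq in auto)
qed

lemma surviving_cohort_deriv:
  assumes "t > r"
  shows "(surviving_cohort has_real_derivative
      recruitment t - mul t * surviving_cohort t) (at t)"
proof -
  have "t - tau t > 0"
    using tau_le[of t] assms by linarith
  then have "((\<lambda>x. L (x - tau x)) has_real_derivative
      (mub (t - tau t) * (1 - L (t - tau t) / K (t - tau t)) * S (t - tau t)
        - mul (t - tau t) * L (t - tau t)) * (1 - tau' t)) (at t)"
    using DERIV_chain2[OF L_deriv DERIV_diff[OF DERIV_ident tau_deriv]] by simp
  from DERIV_mult[OF this larval_survival_deriv[OF assms]] show ?thesis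
    unfolding surviving_cohort_def[abs_def] recruitment_def
    by (rule DERIV_cong) (use pos(4)[of "t - tau t"] in \<open>simp add: field_simps\<close>)
qed

lemma surviving_cohort_bounded: "bounded (surviving_cohort ` {0..})"
proof -
  obtain C where C: "\<And>t. t \<ge> -r \<Longrightarrow> \<bar>L t\<bar> \<le> C"
    using L_bounded by (auto simp: bounded_real)
  have "\<bar>surviving_cohort t\<bar> \<le> C" if "t \<ge> 0" for t
  proof -
    have "\<bar>surviving_cohort t\<bar> = \<bar>L (t - tau t)\<bar> * larval_survival t"
      using larval_survival_bounds[of t] unfolding surviving_cohort_def abs_mult by simp
    also have "\<dots> \<le> \<bar>L (t - tau t)\<bar>"
      using larval_survival_bounds[of t] by (intro mult_left_le) auto
    also have "\<dots> \<le> C"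
      using C tau_le[of t] that by simp
    finally show ?thesis .
  qed
  then show ?thesis
    unfolding bounded_real by blast
qed

lemma adults_minus_cohort_deriv:
  assumes "t > r"
  shows "((\<lambda>t. S t - surviving_cohort t) has_real_derivative
      - mum t * (S t - surviving_cohort t) + (mul t - mum t) * surviving_cohort t) (at t)"
proof -
  have "t > 0"
    using assms r_pos by linarith
  from DERIV_diff[OF S_has_deriv_recruitment[OF this] surviving_cohort_deriv[OF assms]]
  show ?thesis
    by (rule DERIV_cong) (simp add: algebra_simps)
qed

lemma S_bounded: "bounded (S ` {-r..})"
proof (rule bounded_image_Ici)
  show "continuous_on {-r..r+1} S"
    using S_cont by (rule continuous_on_subset) auto
  define Z where "Z t = S t - surviving_cohort t" for t
  obtain m0 where m0: "m0 > 0" "\<And>t. m0 \<le> mum t"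
    using compact_range_pos_bounds[OF compact_range(3) pos(3)] by metis
  obtain C where C: "\<And>t. t \<ge> 0 \<Longrightarrow> \<bar>surviving_cohort t\<bar> \<le> C"
    using surviving_cohort_bounded by (auto simp: bounded_real)
  have "bounded ((\<lambda>t. (mul t - mum t) * surviving_cohort t) ` {r<..})"
    using coefficients_bounded(2,3) surviving_cohort_bounded r_pos
    by (intro bounded_mult_comp bounded_minus_comp) (auto intro: bounded_subset)
  then obtain H where H: "\<And>t. t > r \<Longrightarrow> \<bar>(mul t - mum t) * surviving_cohort t\<bar> \<le> H"
    by (auto simp: bounded_real)
  have Z_deriv: "(Z has_real_derivative - mum t * Z t + (mul t - mum t) * surviving_cohort t)
      (at t)" if "t > r" for t
    unfolding Z_def[abs_def] using adults_minus_cohort_deriv[OF that] .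
  have "continuous_on {r+1..} Z"
  proof (intro continuous_at_imp_continuous_on ballI)
    fix t assume "t \<in> {r+1..}"
    then show "isCont Z t"
      using Z_deriv[of t] by (auto intro: DERIV_isCont)
  qed
  moreover have "H \<ge> 0"
    using H[of "r + 1"] by linarith
  ultimately have "Z t \<le> max (Z (r+1)) (H / m0)" if "t \<ge> r + 1" for t
    using le_max_if_linear_decay[of "r+1" Z mum "\<lambda>t. (mul t - mum t) * surviving_cohort t"]
      Z_deriv m0 H that by (simp add: abs_le_iff)
  then have "\<bar>S t\<bar> \<le> max (Z (r+1)) (H / m0) + C" if "t \<ge> r + 1" for t
    using that C[of t] nonneg[of t] r_pos unfolding Z_def by fastforce
  then show "bounded (S ` {r+1..})"
    unfolding bounded_real by blast
qed

lemma L_deriv_bounded: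
  "bounded ((\<lambda>t. mub t * (1 - L t / K t) * S t - mul t * L t) ` {0<..})"
proof -
  have sub: "{0<..} \<subseteq> {-r..}"
    using r_pos by auto
  have "bounded (mub ` {0<..})" "bounded (mul ` {0<..})"
    using coefficients_bounded(1,2) by (auto intro: bounded_subset)
  moreover have "bounded (L ` {0<..})" "bounded (S ` {0<..})"
    "bounded ((\<lambda>t. L t / K t) ` {0<..})"
    using L_bounded S_bounded L_div_K_bounded sub by (auto intro: bounded_subset)
  ultimately show ?thesis
    by (intro bounded_minus_comp bounded_mult_comp) (simp_all add: image_constant_conv)
qed

lemma S_deriv_bounded: "bounded ((\<lambda>t. recruitment t - mum t * S t) ` {0<..})"
proof -
  have delay: "(\<lambda>t. t - tau t) ` {0<..} \<subseteq> {-r..}"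
  proof
    fix x assume "x \<in> (\<lambda>t. t - tau t) ` {0<..}"
    then obtain t where "t > 0" "x = t - tau t"
      by auto
    then show "x \<in> {-r..}"
      using tau_le[of t] by simp
  qed
  have "\<bar>larval_survival t\<bar> \<le> 1" for t
    using larval_survival_bounds[of t] by simp
  then have "bounded (range larval_survival)"
    unfolding bounded_real by blast
  then have "bounded (larval_survival ` {0<..})"
    by (auto intro: bounded_subset)
  moreover have "bounded (tau' ` {0<..})" "bounded (mum ` {0<..})"
    "bounded ((\<lambda>t. mub (t - tau t)) ` {0<..})"
    using coefficients_bounded(1,3,4) by (auto intro: bounded_subset)
  moreover have "bounded ((\<lambda>t. L (t - tau t) / K (t - tau t)) ` {0<..})"
    "bounded ((\<lambda>t. S (t - tau t)) ` {0<..})"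
    using bounded_comp_image[OF L_div_K_bounded delay] bounded_comp_image[OF S_bounded delay]
    by simp_all
  moreover have "bounded (S ` {0<..})"
    using S_bounded r_pos by (auto intro: bounded_subset)
  ultimately show ?thesis
    unfolding recruitment_def
    by (intro bounded_minus_comp bounded_mult_comp) (simp_all add: image_constant_conv)
qed

lemma orbit_uniformly_continuous: "uniformly_continuous_on {-r..} (\<lambda>t. (L t, S t))"
proof (rule uniformly_continuous_on_Ici)
  show "continuous_on {-r..} (\<lambda>t. (L t, S t))"
    using L_cont S_cont by (rule continuous_on_Pair)
  have L_cont0: "continuous_on {0..} L" and S_cont0: "continuous_on {0..} S"
    using L_cont S_cont r_pos by (auto intro: continuous_on_subset)
  obtain DL where "DL-lipschitz_on {0..} L"
    using lipschitz_on_Ici_if_deriv_bounded[OF L_cont0 L_deriv L_deriv_bounded] .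
  moreover obtain DS where "DS-lipschitz_on {0..} S"
    using lipschitz_on_Ici_if_deriv_bounded[OF S_cont0 S_has_deriv_recruitment S_deriv_bounded] .
  ultimately show "uniformly_continuous_on {0..} (\<lambda>t. (L t, S t))"
    by (intro lipschitz_on_uniformly_continuous) (rule lipschitz_on_Pair)
qed

lemma orbit_bounded: "bounded ((\<lambda>t. (L t, S t)) ` {-r..})"
  by (rule bounded_subset[OF bounded_Times[OF L_bounded S_bounded]]) auto

theorem orbit_precompact:
  "compact (closure ((\<lambda>t. hist_seg r (\<lambda>s. (L s, S s)) t) ` {0..}))"
  using compact_closure_hist_seg_orbit[OF _ orbit_uniformly_continuous orbit_bounded] r_pos
  by simp

end

theorem lemma3p8:
  fixes w :: real
    and mub mul mum K tau tau' :: "real \<Rightarrow> real"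
    and phi :: "real \<Rightarrow> real \<times> real"
    and L S :: "real \<Rightarrow> real"
  assumes w_pos: "w > 0"
    and per: "periodic_fun w mub" "periodic_fun w mul" "periodic_fun w mum"
             "periodic_fun w K" "periodic_fun w tau"
    and cont: "continuous_on UNIV mub" "continuous_on UNIV mul" "continuous_on UNIV mum"
              "continuous_on UNIV K" "continuous_on UNIV tau"
    and pos: "\<And>t. mub t > 0" "\<And>t. mul t > 0" "\<And>t. mum t > 0" "\<And>t. K t > 0" "\<And>t. tau t > 0"
    and tau_C1: "\<And>t. (tau has_real_derivative tau' t) (at t)" "continuous_on UNIV tau'"
    and K_bdd: "bounded (range K)"
    and phi_cont: "continuous_on {- (SUP t\<in>{0..w}. tau t)..0} phi"
    and phi_nonneg: "\<And>s. s \<in> {- (SUP t\<in>{0..w}. tau t)..0} \<Longrightarrow> fst (phi s) \<ge> 0 \<and> snd (phi s) \<ge> 0"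
    and init: "\<And>s. s \<in> {- (SUP t\<in>{0..w}. tau t)..0} \<Longrightarrow> L s = fst (phi s) \<and> S s = snd (phi s)"
    and sol_cont: "continuous_on {- (SUP t\<in>{0..w}. tau t)..} L"
                  "continuous_on {- (SUP t\<in>{0..w}. tau t)..} S"
    and sol_nonneg: "\<And>t. t \<ge> - (SUP t\<in>{0..w}. tau t) \<Longrightarrow> L t \<ge> 0 \<and> S t \<ge> 0"
    and eqL: "\<And>t. t > 0 \<Longrightarrow>
       (L has_real_derivative
          (mub t * (1 - L t / K t) * S t - mul t * L t)) (at t)"
    and eqS: "\<And>t. t > 0 \<Longrightarrow>
       (S has_real_derivative
          ((1 - tau' t) * mub (t - tau t) * (1 - L (t - tau t) / K (t - tau t)) * S (t - tau t)
             * exp (- integral {t - tau t..t} mul)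
           - mum t * S t)) (at t)"
  shows "compact (closure
           ((\<lambda>t. hist_seg (SUP t\<in>{0..w}. tau t) (\<lambda>s. (L s, S s)) t) ` {0..}))"
proof -
  have "periodic_fun w tau'"
    by (rule periodic_fun_deriv[OF per(5) tau_C1(1)])
  then have ranges: "compact (range mub)" "compact (range mul)" "compact (range mum)"
      "compact (range K)" "compact (range tau')"
    using per cont tau_C1(2) by (auto intro: periodic_fun_compact_range[OF _ w_pos])
  interpret mosquito_patch mub mul mum K tau tau' L S "SUP t\<in>{0..w}. tau t"
    using ranges pos cont(2) tau_C1(1) periodic_fun_le_SUP[OF per(5) w_pos cont(5)]
      sol_cont sol_nonneg eqL eqS
    by unfold_locales
  show ?thesis
    by (rule orbit_precompact)
qed

end
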